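(* For proposition letters $p,o,q$, the formula $\mathcal{K}hm(p,o,q)\wedge\neg\mathcal{K}hm(p,\bot,q)\to\mathcal{K}hm(p,\bot,o)$ is valid, i.e., true at every state of every model.
   Context: Fix a countable set of proposition letters $\mathbf{P}$ and a countable non-empty set of action symbols $\Sigma$. Formulas: $\phi ::= p \mid \neg\phi \mid (\phi\wedge\phi) \mid \mathcal{K}hm(\phi,\phi,\phi)$; $\top,\bot,\to$ as usual. A model is $(S,\mathcal{R},\mathcal{V})$ with $S\neq\emptyset$, $\mathcal{R}:\Sigma\to 2^{S\times S}$, $\mathcal{V}:S\to 2^{\mathbf{P}}$. For $\sigma=a_1\cdots a_n\in\Sigma^*$, $s\xrightarrow{\sigma}t$ means there is a path $s\xrightarrow{a_1}\cdots\xrightarrow{a_n}t$ ($s\xrightarrow{\epsilon}s$ for the empty sequence); $\sigma_k=a_1\cdots a_k$, $\sigma_0=\epsilon$. $\sigma$ is strongly $\chi$-executable at $s'$ if for each $0\le k<n$, every $t$ with $s'\xrightarrow{\sigma_k}t$ has an $a_{k+1}$-successor, and every $t$ with $s'\xrightarrow{\sigma_k}t$ for $0<k<n$ satisfies $\chi$. $\mathcal{M},s\vDash\mathcal{K}hm(\psi,\chi,\phi)$ iff there is $\sigma\in\Sigma^*$ such that for every $s'$ with $\mathcal{M},s'\vDash\psi$, $\sigma$ is strongly $\chi$-executable at $s'$ and $\mathcal{M},t\vDash\phi$ for all $t$ with $s'\xrightarrow{\sigma}t$; atoms and Booleans are interpreted as usual ($\mathcal{M},s\vDash p$ iff $p\in\mathcal{V}(s)$).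 *)

theory Defs
  imports "HOL-Library.Countable"
begin

datatype 'p fm = Atom 'p | Neg "'p fm" | Conj "'p fm" "'p fm" | Khm "'p fm" "'p fm" "'p fm"

definition fbot :: "'p fm" where "fbot = Conj (Atom undefined) (Neg (Atom undefined))"
definition ftop :: "'p fm" where "ftop = Neg fbot"
definition Imp :: "'p fm \<Rightarrow> 'p fm \<Rightarrow> 'p fm" where "Imp a b = Neg (Conj a (Neg b))"

record ('s, 'a, 'p) model =
  St :: "'s set"
  Rel :: "'a \<Rightarrow> ('s \<times> 's) set"
  Val :: "'s \<Rightarrow> 'p set"

definition is_model :: "('s, 'a, 'p) model \<Rightarrow> bool" where
  "is_model M \<longleftrightarrow> St M \<noteq> {} \<and> (\<forall>a. Rel M a \<subseteq> St M \<times> St M)"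

fun reach :: "('s, 'a, 'p) model \<Rightarrow> 's \<Rightarrow> 'a list \<Rightarrow> 's \<Rightarrow> bool" where
  "reach M s [] t = (s = t)"
| "reach M s (a # \<sigma>) t = (\<exists>u. (s, u) \<in> Rel M a \<and> reach M u \<sigma> t)"

definition strong_exec :: "('s, 'a, 'p) model \<Rightarrow> ('s \<Rightarrow> bool) \<Rightarrow> 'a list \<Rightarrow> 's \<Rightarrow> bool" where
  "strong_exec M chi \<sigma> s' \<longleftrightarrow>
     (\<forall>k < length \<sigma>. \<forall>t. reach M s' (take k \<sigma>) t \<longrightarrow>
         (\<exists>u. (t, u) \<in> Rel M (\<sigma> ! k)) \<and> (0 < k \<longrightarrow> chi t))"

primrec sat :: "('s, 'a, 'p) model \<Rightarrow> 's \<Rightarrow> 'p fm \<Rightarrow> bool" where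
  "sat M s (Atom p) = (p \<in> Val M s)"
| "sat M s (Neg \<phi>) = (\<not> sat M s \<phi>)"
| "sat M s (Conj \<phi> \<psi>) = (sat M s \<phi> \<and> sat M s \<psi>)"
| "sat M s (Khm \<psi> \<chi> \<phi>) =
     (\<exists>\<sigma>. \<forall>s' \<in> St M. sat M s' \<psi> \<longrightarrow>
        strong_exec M (\<lambda>t. sat M t \<chi>) \<sigma> s' \<and>
        (\<forall>t. reach M s' \<sigma> t \<longrightarrow> sat M t \<phi>))"

end

theory Submission
  imports Defs
begin

text \<open>Let \<open>\<sigma>\<close> witness \<open>Khm(p,o,q)\<close>. The intermediate condition \<open>o\<close> only constrains
  states strictly inside \<open>\<sigma>\<close>, so if \<open>\<sigma>\<close> has at most one action it also witnesses
  \<open>Khm(p,\<bottom>,q)\<close>. Otherwise its first action \<open>a\<close> is executable at every \<open>p\<close>-state and leads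
  only to \<open>o\<close>-states, so the one-step plan \<open>a\<close> witnesses \<open>Khm(p,\<bottom>,o)\<close>.\<close>

definition khm_plan :: "('s, 'a, 'p) model \<Rightarrow> 'p fm \<Rightarrow> 'p fm \<Rightarrow> 'p fm \<Rightarrow> 'a list \<Rightarrow> bool" where
  "khm_plan M \<psi> \<chi> \<phi> \<sigma> \<longleftrightarrow>
     (\<forall>s' \<in> St M. sat M s' \<psi> \<longrightarrow>
        strong_exec M (\<lambda>t. sat M t \<chi>) \<sigma> s' \<and> (\<forall>t. reach M s' \<sigma> t \<longrightarrow> sat M t \<phi>))"

lemma sat_Khm_iff_khm_plan: "sat M s (Khm \<psi> \<chi> \<phi>) \<longleftrightarrow> (\<exists>\<sigma>. khm_plan M \<psi> \<chi> \<phi> \<sigma>)"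
  by (simp add: khm_plan_def)

lemma strong_exec_short_plan:
  assumes "strong_exec M chi \<sigma> s" and "length \<sigma> \<le> 1"
  shows "strong_exec M chi' \<sigma> s"
  using assms by (auto simp: strong_exec_def)

lemma strong_exec_Cons_Cons:
  assumes "strong_exec M chi (a # b # \<tau>) s"
  shows "strong_exec M chi' [a] s" and "\<And>t. (s, t) \<in> Rel M a \<Longrightarrow> chi t"
proof -
  show "strong_exec M chi' [a] s"
    using assms[unfolded strong_exec_def, rule_format, of 0 s] by (simp add: strong_exec_def)
next
  fix t
  assume "(s, t) \<in> Rel M a"
  then have "reach M s (take 1 (a # b # \<tau>)) t" by simp
  then show "chi t" using assms[unfolded strong_exec_def, rule_format, of 1 t] by simp
qed

lemma khm_plan_short:
  assumes "khm_plan M \<psi> \<chi> \<phi> \<sigma>" and "length \<sigma> \<le> 1"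
  shows "khm_plan M \<psi> \<chi>' \<phi> \<sigma>"
  unfolding khm_plan_def
proof (intro ballI impI conjI)
  fix s' assume "s' \<in> St M" and "sat M s' \<psi>"
  with assms(1) have plan_at: "strong_exec M (\<lambda>t. sat M t \<chi>) \<sigma> s'"
    and post_at: "\<forall>t. reach M s' \<sigma> t \<longrightarrow> sat M t \<phi>"
    by (simp_all add: khm_plan_def)
  from plan_at assms(2) show "strong_exec M (\<lambda>t. sat M t \<chi>') \<sigma> s'"
    by (rule strong_exec_short_plan)
  from post_at show "\<forall>t. reach M s' \<sigma> t \<longrightarrow> sat M t \<phi>" .
qed

lemma khm_plan_first_action:
  assumes "khm_plan M \<psi> \<chi> \<phi> (a # b # \<tau>)"
  shows "khm_plan M \<psi> \<chi>' \<chi> [a]"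
  unfolding khm_plan_def
proof (intro ballI impI conjI allI)
  fix s' assume "s' \<in> St M" and "sat M s' \<psi>"
  with assms have first_step: "strong_exec M (\<lambda>t. sat M t \<chi>) (a # b # \<tau>) s'"
    by (simp add: khm_plan_def)
  show "strong_exec M (\<lambda>t. sat M t \<chi>') [a] s'"
    using first_step by (rule strong_exec_Cons_Cons(1))
  fix t assume "reach M s' [a] t"
  then show "sat M t \<chi>"
    using strong_exec_Cons_Cons(2)[OF first_step] by simp
qed

lemma sat_Khm_intermediate_or_first_step:
  assumes "sat M s (Khm \<psi> \<chi> \<phi>)"
  shows "sat M s (Khm \<psi> \<chi>' \<phi>) \<or> sat M s (Khm \<psi> \<chi>' \<chi>)"
proof -
  from assms obtain \<sigma> where plan: "khm_plan M \<psi> \<chi> \<phi> \<sigma>"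
    by (auto simp only: sat_Khm_iff_khm_plan)
  show ?thesis
  proof (cases "length \<sigma> \<le> 1")
    case True
    with plan have "khm_plan M \<psi> \<chi>' \<phi> \<sigma>" by (rule khm_plan_short)
    then have "sat M s (Khm \<psi> \<chi>' \<phi>)" unfolding sat_Khm_iff_khm_plan ..
    then show ?thesis ..
  next
    case False
    then obtain a b \<tau> where "\<sigma> = a # b # \<tau>"
      by (cases \<sigma> rule: remdups_adj.cases) auto
    with plan have "khm_plan M \<psi> \<chi> \<phi> (a # b # \<tau>)" by simp
    then have "khm_plan M \<psi> \<chi>' \<chi> [a]" by (rule khm_plan_first_action)
    then have "sat M s (Khm \<psi> \<chi>' \<chi>)" unfolding sat_Khm_iff_khm_plan ..
    then show ?thesis ..
  qed
qed

theorem mainTheorem5: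
  fixes p r q :: "'p::countable"
  shows "\<forall>M :: ('s, 'a::countable, 'p) model. is_model M \<longrightarrow>
           (\<forall>s \<in> St M. sat M s
              (Imp (Conj (Khm (Atom p) (Atom r) (Atom q)) (Neg (Khm (Atom p) fbot (Atom q))))
                   (Khm (Atom p) fbot (Atom r))))"
proof (intro allI impI ballI)
  fix M :: "('s, 'a, 'p) model" and s
  have "sat M s (Khm (Atom p) fbot (Atom q)) \<or> sat M s (Khm (Atom p) fbot (Atom r))"
    if "sat M s (Khm (Atom p) (Atom r) (Atom q))"
    using that by (rule sat_Khm_intermediate_or_first_step)
  then show "sat M s (Imp (Conj (Khm (Atom p) (Atom r) (Atom q)) (Neg (Khm (Atom p) fbot (Atom q))))
                   (Khm (Atom p) fbot (Atom r)))"
    by (simp only: Imp_def sat.simps(2,3)) blast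
qed

end
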